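(* Let $F$ be an infinite field, let $k\ge 1$, let $\boldsymbol{X}=(X_1,\ldots,X_k)$ be a tuple of pairwise disjoint finite sets of variables, let $f\in F\langle \boldsymbol{X}\rangle = F\langle X_1\rangle\otimes_F\cdots\otimes_F F\langle X_k\rangle$, let $n\ge 1$, and let $L$ be a field extending $F$. Then the following are equivalent: (i) the partially commutative identity $f=0$ holds in $M_n(L)\otimes_F\cdots\otimes_F M_n(L)$ ($k$ factors), i.e. $\widetilde{\boldsymbol{v}}(f)=0$ for every valuation $\boldsymbol{v}=(v_1,\ldots,v_k)$ with $v_i:X_i\to M_n(L)$; (ii) $\Phi_n(f)=0$. Moreover, if $f$ has degree strictly less than $n$, then (i) and (ii) are both equivalent to each of: (iii) $\Psi_n(f)=0$; (iv) $f=0$ in $F\langle \boldsymbol{X}\rangle$.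
   Context: $F\langle X\rangle$ denotes the free $F$-algebra on a set $X$ (polynomials in non-commuting variables from $X$; monomials are words in $X^*$). For a tuple $\boldsymbol{X}=(X_1,\ldots,X_k)$ of pairwise disjoint sets, $F\langle \boldsymbol{X}\rangle := F\langle X_1\rangle\otimes_F\cdots\otimes_F F\langle X_k\rangle$; every element can be written uniquely as a finite $F$-linear combination of distinct monomials $m_1\otimes\cdots\otimes m_k$ with $m_j\in X_j^*$ (so $F\langle\boldsymbol{X}\rangle$ is the free $F$-algebra, i.e. monoid algebra, of $X_1^*\times\cdots\times X_k^*$). The degree of a monomial $m_1\otimes\cdots\otimes m_k$ is $|m_1|+\cdots+|m_k|$, and the degree of a polynomial is the maximum degree of its monomials. A valuation in $(A_1,\ldots,A_k)$ ($F$-algebras) is a tuple $\boldsymbol{v}=(v_1,\ldots,v_k)$ of maps $v_i:X_i\to A_i$; each extends uniquely to an $F$-algebra homomorphism $\widetilde{v_i}:F\langle X_i\rangle\to A_i$, and $\widetilde{\boldsymbol{v}}:=\widetilde{v_1}\otimes\cdots\otimes\widetilde{v_k}:F\langle\boldsymbol{X}\rangle\to A_1\otimes_F\cdots\otimes_F A_k$. Tensor products of matrix algebras are identified with algebras of larger matrices via the Kronecker product: for $a\times a$ matrix $M=(m_{ij})$ and $b\times b$ matrix $N$, $M\otimes N$ is the $ab\times ab$ block matrix with blocks $m_{ij}N$. Generic matrices: for a finite set $X$ and each $x\in X$, introduce commuting indeterminates $t^{(x)}_{ij}$, $1\le i,j\le n$. The generic matrix algebra $F_n\langle X\rangle$ is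 the $F$-algebra of $n\times n$ matrices (with entries polynomials in the $t^{(x)}_{ij}$) generated by the matrices $(t^{(x)}_{ij})_{i,j}$, $x\in X$, and $\Phi^X_n:F\langle X\rangle\to F_n\langle X\rangle$ is the $F$-algebra homomorphism with $\Phi^X_n(x)=(t^{(x)}_{ij})_{i,j}$. Also $\Psi^X_n$ is the $F$-algebra homomorphism from $F\langle X\rangle$ to $n\times n$ matrices over the polynomial ring in the $t^{(x)}_{ij}$ sending $x$ to the matrix whose only nonzero entries are $t^{(x)}_{12},t^{(x)}_{23},\ldots,t^{(x)}_{n-1,n}$ on the superdiagonal (positions $(i,i+1)$). Finally $\Phi_n:=\Phi^{X_1}_n\otimes\cdots\otimes\Phi^{X_k}_n:F\langle\boldsymbol{X}\rangle\to F_n\langle X_1\rangle\otimes\cdots\otimes F_n\langle X_k\rangle$ and $\Psi_n:=\Psi^{X_1}_n\otimes\cdots\otimes\Psi^{X_k}_n$, both with values in $n^k\times n^k$ matrices. *)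

theory Defs
  imports "Jordan_Normal_Form.Ring_Hom_Matrix" "HOL-Library.Poly_Mapping"
begin

text \<open>Partially commutative polynomials: an element of
  F<X_1> (x) ... (x) F<X_k> is a finitely supported map from monomials
  m_1 (x) ... (x) m_k (represented as lists of words of length k) to F.\<close>

definition pc_monomials :: "nat \<Rightarrow> (nat \<Rightarrow> 'v set) \<Rightarrow> 'v list list set" where
  "pc_monomials k X = {m. length m = k \<and> (\<forall>i<k. set (m ! i) \<subseteq> X i)}"

definition pc_poly :: "nat \<Rightarrow> (nat \<Rightarrow> 'v set) \<Rightarrow> ('v list list \<Rightarrow>\<^sub>0 'a::zero) \<Rightarrow> bool" where
  "pc_poly k X f \<longleftrightarrow> Poly_Mapping.keys f \<subseteq> pc_monomials k X"

definition pc_degree :: "('v list list \<Rightarrow>\<^sub>0 'a::zero) \<Rightarrow> nat" where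
  "pc_degree f = Max (insert 0 ((\<lambda>m. sum_list (map length m)) ` Poly_Mapping.keys f))"

definition word_mat :: "nat \<Rightarrow> ('v \<Rightarrow> 'b::semiring_1 mat) \<Rightarrow> 'v list \<Rightarrow> 'b mat" where
  "word_mat n v w = foldr (\<lambda>x A. v x * A) w (1\<^sub>m n)"

definition kron :: "'b::semiring_1 mat \<Rightarrow> 'b mat \<Rightarrow> 'b mat" where
  "kron M N = mat (dim_row M * dim_row N) (dim_col M * dim_col N)
     (\<lambda>(i, j). M $$ (i div dim_row N, j div dim_col N) * N $$ (i mod dim_row N, j mod dim_col N))"

fun kron_list :: "'b::semiring_1 mat list \<Rightarrow> 'b mat" where
  "kron_list [] = 1\<^sub>m 1"
| "kron_list (A # As) = kron A (kron_list As)"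

text \<open>Evaluation of f under the valuation (v_1,...,v_k) into n x n matrices,
  the tensor product being identified with n^k x n^k matrices via Kronecker product;
  emb maps the coefficient field into the entry ring.\<close>
definition pc_eval :: "nat \<Rightarrow> nat \<Rightarrow> ('a \<Rightarrow> 'b::semiring_1) \<Rightarrow> (nat \<Rightarrow> 'v \<Rightarrow> 'b mat)
    \<Rightarrow> ('v list list \<Rightarrow>\<^sub>0 'a::zero) \<Rightarrow> 'b mat" where
  "pc_eval n k emb v f = mat (n ^ k) (n ^ k) (\<lambda>rc.
      \<Sum>m\<in>Poly_Mapping.keys f. emb (Poly_Mapping.lookup f m) * kron_list (map (\<lambda>i. word_mat n (v i) (m ! i)) [0..<k]) $$ rc)"

text \<open>Polynomial ring over F in commuting indeterminates t^(x)_ij (indexed by (x,i,j)).\<close>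
type_synonym ('v, 'a) genpoly = "(('v \<times> nat \<times> nat) \<Rightarrow>\<^sub>0 nat) \<Rightarrow>\<^sub>0 'a"

definition tvar :: "'v \<Rightarrow> nat \<Rightarrow> nat \<Rightarrow> ('v, 'a::comm_ring_1) genpoly" where
  "tvar x i j = Poly_Mapping.single (Poly_Mapping.single (x, i, j) 1) 1"

definition const_poly :: "'a::comm_ring_1 \<Rightarrow> ('v, 'a) genpoly" where
  "const_poly c = Poly_Mapping.single 0 c"

text \<open>Generic matrix (t^(x)_ij) (indices 0-based).\<close>
definition generic_mat :: "nat \<Rightarrow> 'v \<Rightarrow> ('v, 'a::comm_ring_1) genpoly mat" where
  "generic_mat n x = mat n n (\<lambda>(i, j). tvar x i j)"

definition superdiag_mat :: "nat \<Rightarrow> 'v \<Rightarrow> ('v, 'a::comm_ring_1) genpoly mat" where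
  "superdiag_mat n x = mat n n (\<lambda>(i, j). if j = i + 1 then tvar x i j else 0)"

definition Phi :: "nat \<Rightarrow> nat \<Rightarrow> ('v list list \<Rightarrow>\<^sub>0 'a::comm_ring_1) \<Rightarrow> ('v, 'a) genpoly mat" where
  "Phi n k f = pc_eval n k const_poly (\<lambda>_. generic_mat n) f"

definition Psi :: "nat \<Rightarrow> nat \<Rightarrow> ('v list list \<Rightarrow>\<^sub>0 'a::comm_ring_1) \<Rightarrow> ('v, 'a) genpoly mat" where
  "Psi n k f = pc_eval n k const_poly (\<lambda>_. superdiag_mat n) f"

definition pc_identity :: "nat \<Rightarrow> nat \<Rightarrow> (nat \<Rightarrow> 'v set) \<Rightarrow> ('a \<Rightarrow> 'b::field)
    \<Rightarrow> ('v list list \<Rightarrow>\<^sub>0 'a::field) \<Rightarrow> bool" where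
  "pc_identity n k X emb f \<longleftrightarrow>
     (\<forall>v. (\<forall>i<k. \<forall>x\<in>X i. v i x \<in> carrier_mat n n) \<longrightarrow> pc_eval n k emb v f = 0\<^sub>m (n ^ k) (n ^ k))"

end

theory Submission
  imports Defs "HOL-Computational_Algebra.Polynomial"
begin

text \<open>Evaluating the entries of the generic matrices commutes with partially commutative
  evaluation, so Phi_n(f) specialises to f under every valuation in M_n(L). Conversely, if every
  valuation kills f, each entry of Phi_n(f) is a polynomial over the infinite field F that vanishes
  at every point, hence is zero. For deg f < n the superdiagonal matrices are faithful: for a
  monomial m_1 (x) ... (x) m_k with factor lengths l_1, ..., l_k, the entry of Psi_n(f) in row 0 and
  column (l_1, ..., l_k) contains the commutative monomial that records every letter of m_j together
  with its position in m_j, and disjointness of the X_j lets one read m_1 (x) ... (x) m_k back off it.\<close>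

section \<open>Evaluation of commutative polynomials\<close>

definition eval_monom :: "('w \<Rightarrow> 'b::comm_semiring_1) \<Rightarrow> ('w \<Rightarrow>\<^sub>0 nat) \<Rightarrow> 'b" where
  "eval_monom q \<mu> = (\<Prod>y\<in>Poly_Mapping.keys \<mu>. q y ^ Poly_Mapping.lookup \<mu> y)"

definition eval_poly :: "('a::zero \<Rightarrow> 'b::comm_semiring_1) \<Rightarrow> ('w \<Rightarrow> 'b) \<Rightarrow> (('w \<Rightarrow>\<^sub>0 nat) \<Rightarrow>\<^sub>0 'a) \<Rightarrow> 'b" where
  "eval_poly e q P = (\<Sum>\<mu>\<in>Poly_Mapping.keys P. e (Poly_Mapping.lookup P \<mu>) * eval_monom q \<mu>)"

lemma eval_monom_superset:
  assumes "finite S" "Poly_Mapping.keys \<mu> \<subseteq> S"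
  shows "eval_monom q \<mu> = (\<Prod>y\<in>S. q y ^ Poly_Mapping.lookup \<mu> y)"
  unfolding eval_monom_def
  by (rule prod.mono_neutral_left[OF assms]) (auto simp: in_keys_iff)

lemma eval_monom_zero [simp]: "eval_monom q 0 = 1"
  by (simp add: eval_monom_def)

lemma eval_monom_single [simp]: "eval_monom q (Poly_Mapping.single y d) = q y ^ d"
  by (simp add: eval_monom_def)

lemma eval_monom_add: "eval_monom q (\<mu> + \<nu>) = eval_monom q \<mu> * eval_monom q \<nu>"
proof -
  let ?S = "Poly_Mapping.keys \<mu> \<union> Poly_Mapping.keys \<nu>"
  have "eval_monom q (\<mu> + \<nu>) = (\<Prod>y\<in>?S. q y ^ Poly_Mapping.lookup (\<mu> + \<nu>) y)"
    using keys_add[of \<mu> \<nu>] by (intro eval_monom_superset) auto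
  also have "\<dots> = (\<Prod>y\<in>?S. q y ^ Poly_Mapping.lookup \<mu> y) * (\<Prod>y\<in>?S. q y ^ Poly_Mapping.lookup \<nu> y)"
    by (simp add: lookup_add power_add prod.distrib)
  also have "\<dots> = eval_monom q \<mu> * eval_monom q \<nu>"
    using eval_monom_superset[of ?S \<mu> q] eval_monom_superset[of ?S \<nu> q] by simp
  finally show ?thesis .
qed

lemma eval_monom_cong:
  "(\<And>y. y \<in> Poly_Mapping.keys \<mu> \<Longrightarrow> q y = q' y) \<Longrightarrow> eval_monom q \<mu> = eval_monom q' \<mu>"
  unfolding eval_monom_def by (rule prod.cong) auto

lemma (in comm_semiring_hom) eval_monom_hom: "eval_monom (hom \<circ> q) \<mu> = hom (eval_monom q \<mu>)"
  unfolding eval_monom_def by (simp add: hom_distribs)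

lemma eval_poly_superset:
  assumes "e 0 = 0" "finite S" "Poly_Mapping.keys P \<subseteq> S"
  shows "eval_poly e q P = (\<Sum>\<mu>\<in>S. e (Poly_Mapping.lookup P \<mu>) * eval_monom q \<mu>)"
  unfolding eval_poly_def
  by (rule sum.mono_neutral_left[OF assms(2,3)]) (auto simp: in_keys_iff assms(1))

lemma eval_poly_zero [simp]: "eval_poly e q 0 = 0"
  by (simp add: eval_poly_def)

lemma eval_poly_single:
  "e 0 = 0 \<Longrightarrow> eval_poly e q (Poly_Mapping.single \<mu> c) = e c * eval_monom q \<mu>"
  by (simp add: eval_poly_def)

lemma eval_poly_add:
  assumes "comm_monoid_add_hom e"
  shows "eval_poly e q (P + Q) = eval_poly e q P + eval_poly e q Q"
proof -
  interpret comm_monoid_add_hom e by fact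
  let ?S = "Poly_Mapping.keys P \<union> Poly_Mapping.keys Q"
  have "eval_poly e q (P + Q) = (\<Sum>\<mu>\<in>?S. e (Poly_Mapping.lookup (P + Q) \<mu>) * eval_monom q \<mu>)"
    using keys_add[of P Q] by (intro eval_poly_superset) auto
  also have "\<dots> = (\<Sum>\<mu>\<in>?S. e (Poly_Mapping.lookup P \<mu>) * eval_monom q \<mu>)
      + (\<Sum>\<mu>\<in>?S. e (Poly_Mapping.lookup Q \<mu>) * eval_monom q \<mu>)"
    by (simp add: lookup_add hom_add distrib_right sum.distrib)
  also have "\<dots> = eval_poly e q P + eval_poly e q Q"
    using eval_poly_superset[of e ?S P q] eval_poly_superset[of e ?S Q q] by simp
  finally show ?thesis .
qed

lemma eval_poly_sum:
  "comm_monoid_add_hom e \<Longrightarrow> eval_poly e q (sum F A) = (\<Sum>a\<in>A. eval_poly e q (F a))"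
  by (induction A rule: infinite_finite_induct) (auto simp: eval_poly_add)

lemma poly_mapping_sum_single:
  "P = (\<Sum>\<mu>\<in>Poly_Mapping.keys P. Poly_Mapping.single \<mu> (Poly_Mapping.lookup P \<mu>))"
  by (rule poly_mapping_eqI)
    (auto simp: lookup_sum lookup_single when_def in_keys_iff sum.delta' simp del: lookup_not_eq_zero_eq_in_keys)

lemma eval_poly_mult:
  assumes "comm_semiring_hom e"
  shows "eval_poly e q (P * Q) = eval_poly e q P * eval_poly e q Q"
proof -
  interpret comm_semiring_hom e by fact
  have add_hom: "comm_monoid_add_hom e" by unfold_locales
  have "P * Q = (\<Sum>\<mu>\<in>Poly_Mapping.keys P. \<Sum>\<nu>\<in>Poly_Mapping.keys Q.
      Poly_Mapping.single (\<mu> + \<nu>) (Poly_Mapping.lookup P \<mu> * Poly_Mapping.lookup Q \<nu>))"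
    by (subst poly_mapping_sum_single[of P], subst poly_mapping_sum_single[of Q])
      (simp add: sum_product mult_single)
  then have "eval_poly e q (P * Q) = (\<Sum>\<mu>\<in>Poly_Mapping.keys P. \<Sum>\<nu>\<in>Poly_Mapping.keys Q.
      e (Poly_Mapping.lookup P \<mu>) * eval_monom q \<mu> * (e (Poly_Mapping.lookup Q \<nu>) * eval_monom q \<nu>))"
    by (simp add: eval_poly_sum[OF add_hom] eval_poly_single hom_mult eval_monom_add mult_ac)
  also have "\<dots> = eval_poly e q P * eval_poly e q Q"
    by (simp add: eval_poly_def sum_product)
  finally show ?thesis .
qed

lemma eval_poly_comm_ring_hom:
  assumes "comm_ring_hom e"
  shows "comm_ring_hom (eval_poly e q)"
proof -
  interpret comm_ring_hom e by fact
  have "comm_monoid_add_hom e" "comm_semiring_hom e" by unfold_locales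
  then show ?thesis
    by unfold_locales (auto simp: eval_poly_add eval_poly_mult eval_poly_single simp flip: single_one)
qed

lemma (in comm_semiring_hom) eval_poly_hom:
  "eval_poly hom (hom \<circ> q) P = hom (eval_poly (\<lambda>c. c) q P)"
  unfolding eval_poly_def by (simp add: hom_distribs eval_monom_hom)

lemma (in comm_ring_hom) eval_poly_tvar: "eval_poly hom q (tvar x a b) = q (x, a, b)"
  by (simp add: tvar_def eval_poly_single)

lemma (in comm_ring_hom) eval_poly_const_poly: "eval_poly hom q \<circ> const_poly = hom"
  by (rule ext) (simp add: const_poly_def eval_poly_single)

section \<open>Polynomials vanishing on an infinite field\<close>

lemma power_sum_eq_zero_imp_coeffs_zero:
  fixes a :: "nat \<Rightarrow> 'a::field"
  assumes inf: "infinite (UNIV :: 'a set)" and D: "finite D"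
    and zero: "\<And>t. (\<Sum>d\<in>D. a d * t ^ d) = 0" and d: "d \<in> D"
  shows "a d = 0"
proof -
  define p where "p = (\<Sum>d\<in>D. monom (a d) d)"
  have "poly p t = 0" for t
    using zero by (simp add: p_def poly_sum poly_monom)
  then have "p = 0"
    using inf poly_roots_finite[of p] by auto
  moreover have "coeff p d = a d"
    using D d by (simp add: p_def coeff_sum)
  ultimately show ?thesis by simp
qed

text \<open>Induction on the variables: grouping the sum by the exponent of a new variable y turns it
  into a polynomial in the value of y, whose coefficients must all vanish.\<close>
lemma eval_monom_linear_independent:
  fixes c :: "'i \<Rightarrow> 'a::field" and \<phi> :: "'i \<Rightarrow> ('w \<Rightarrow>\<^sub>0 nat)"
  assumes inf: "infinite (UNIV :: 'a set)" and V: "finite V"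
    and I: "finite I" and inj: "inj_on \<phi> I" and vars: "\<forall>i\<in>I. Poly_Mapping.keys (\<phi> i) \<subseteq> V"
    and zero: "\<forall>q. (\<Sum>i\<in>I. c i * eval_monom q (\<phi> i)) = 0" and i: "i \<in> I"
  shows "c i = 0"
  using V I inj vars zero i
proof (induction V arbitrary: I \<phi> i rule: finite_induct)
  case empty
  then have no_vars: "\<phi> j = 0" if "j \<in> I" for j
    using that by auto
  with empty.prems(2,5) have "I = {i}"
    by (auto simp: inj_on_def)
  then show "c i = 0"
    using empty.prems(4) no_vars[OF empty.prems(5)] by simp
next
  case (insert y V)
  define deg where "deg j = Poly_Mapping.lookup (\<phi> j) y" for j
  define \<psi> where "\<psi> j = Poly_Mapping.update y 0 (\<phi> j)" for j
  define J where "J = {j \<in> I. deg j = deg i}"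
  have split: "\<phi> j = \<psi> j + Poly_Mapping.single y (deg j)" for j
    by (rule poly_mapping_eqI) (auto simp: \<psi>_def deg_def lookup_add lookup_update lookup_single when_def)
  have vars_\<psi>: "Poly_Mapping.keys (\<psi> j) \<subseteq> V" if "j \<in> I" for j
    using insert.prems(3) insert.hyps(2) that by (auto simp: \<psi>_def keys_update)
  have "(\<Sum>j\<in>J. c j * eval_monom q (\<psi> j)) = 0" for q
  proof -
    define A where "A d = (\<Sum>j\<in>{j \<in> I. deg j = d}. c j * eval_monom q (\<psi> j))" for d
    have "(\<Sum>d\<in>deg ` I. A d * t ^ d) = 0" for t
    proof -
      have q_upd: "eval_monom (q(y := t)) (\<psi> j) = eval_monom q (\<psi> j)" if "j \<in> I" for j
        using vars_\<psi>[OF that] insert.hyps(2) by (intro eval_monom_cong) auto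
      have "0 = (\<Sum>j\<in>I. c j * eval_monom (q(y := t)) (\<phi> j))"
        using insert.prems(4) by simp
      also have "\<dots> = (\<Sum>j\<in>I. c j * eval_monom q (\<psi> j) * t ^ deg j)"
        by (intro sum.cong refl)
          (simp add: split[of _] eval_monom_add q_upd mult.assoc del: fun_upd_apply, simp)
      also have "\<dots> = (\<Sum>d\<in>deg ` I. \<Sum>j\<in>{j \<in> I. deg j = d}. c j * eval_monom q (\<psi> j) * t ^ deg j)"
        using insert.prems(1) by (intro sum.group[symmetric]) auto
      also have "\<dots> = (\<Sum>d\<in>deg ` I. A d * t ^ d)"
        by (simp add: A_def sum_distrib_right)
      finally show ?thesis ..
    qed
    then have "A (deg i) = 0"
      using power_sum_eq_zero_imp_coeffs_zero[OF inf finite_imageI[OF insert.prems(1)]]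
        imageI[OF insert.prems(5), of deg] by blast
    then show ?thesis
      by (simp add: A_def J_def)
  qed
  moreover have "inj_on \<psi> J"
    using insert.prems(2) by (auto simp: inj_on_def J_def split[of _])
  ultimately show "c i = 0"
    using insert.IH[of J \<psi> i] insert.prems vars_\<psi> by (auto simp: J_def)
qed

lemma eval_poly_eq_zero_imp_zero:
  fixes P :: "('w \<Rightarrow>\<^sub>0 nat) \<Rightarrow>\<^sub>0 'a::field" and emb :: "'a \<Rightarrow> 'b::field"
  assumes inf: "infinite (UNIV :: 'a set)" and emb: "field_hom emb"
    and zero: "\<And>q. eval_poly emb q P = 0"
  shows "P = 0"
proof -
  interpret field_hom emb by fact
  have "eval_poly (\<lambda>c. c) q P = 0" for q
    using zero[of "emb \<circ> q"] by (simp add: eval_poly_hom)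
  then have "\<forall>q. (\<Sum>\<mu>\<in>Poly_Mapping.keys P. Poly_Mapping.lookup P \<mu> * eval_monom q (id \<mu>)) = 0"
    by (simp add: eval_poly_def)
  then have "Poly_Mapping.lookup P \<mu> = 0" if "\<mu> \<in> Poly_Mapping.keys P" for \<mu>
    using that by (intro eval_monom_linear_independent[OF inf, of "\<Union>(Poly_Mapping.keys ` Poly_Mapping.keys P)"]) auto
  then show ?thesis
    by (metis in_keys_iff poly_mapping_eqI lookup_zero)
qed

lemma eval_poly_mat_eq_zero_imp_zero:
  fixes P :: "('w, 'a::field) genpoly mat" and emb :: "'a \<Rightarrow> 'b::field"
  assumes inf: "infinite (UNIV :: 'a set)" and emb: "field_hom emb" and P: "P \<in> carrier_mat r c"
    and zero: "\<And>q. map_mat (eval_poly emb q) P = 0\<^sub>m r c"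
  shows "P = 0\<^sub>m r c"
proof (rule eq_matI)
  fix i j assume "i < dim_row (0\<^sub>m r c :: ('w, 'a) genpoly mat)"
    "j < dim_col (0\<^sub>m r c :: ('w, 'a) genpoly mat)"
  then have ij: "i < r" "j < c" by simp_all
  have "eval_poly emb q (P $$ (i, j)) = 0" for q
    using P ij arg_cong[OF zero[of q], of "\<lambda>M. M $$ (i, j)"] by simp
  then have "P $$ (i, j) = 0"
    by (rule eval_poly_eq_zero_imp_zero[OF inf emb])
  then show "P $$ (i, j) = 0\<^sub>m r c $$ (i, j)"
    using ij by simp
qed (use P in auto)

section \<open>Kronecker products and partially commutative evaluation\<close>

lemma dim_row_kron [simp]: "dim_row (kron A B) = dim_row A * dim_row B"
  and dim_col_kron [simp]: "dim_col (kron A B) = dim_col A * dim_col B"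
  by (simp_all add: kron_def)

lemma index_kron:
  "i < dim_row A * dim_row B \<Longrightarrow> j < dim_col A * dim_col B \<Longrightarrow>
    kron A B $$ (i, j) = A $$ (i div dim_row B, j div dim_col B) * B $$ (i mod dim_row B, j mod dim_col B)"
  by (simp add: kron_def)

lemma kron_carrier:
  "A \<in> carrier_mat a a \<Longrightarrow> B \<in> carrier_mat b b \<Longrightarrow> kron A B \<in> carrier_mat (a * b) (a * b)"
  by (simp add: kron_def)

lemma kron_list_carrier:
  "\<forall>A\<in>set As. A \<in> carrier_mat n n \<Longrightarrow> kron_list As \<in> carrier_mat (n ^ length As) (n ^ length As)"
  by (induction As) (auto intro: kron_carrier)

lemma word_mat_Cons: "word_mat n V (x # w) = V x * word_mat n V w"
  by (simp add: word_mat_def)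

lemma word_mat_carrier:
  "\<forall>x\<in>set w. V x \<in> carrier_mat n n \<Longrightarrow> word_mat n V w \<in> carrier_mat n n"
  by (induction w) (auto simp: word_mat_def)

lemma word_mat_cong:
  "\<forall>x\<in>set w. V x = V' x \<Longrightarrow> word_mat n V w = word_mat n V' w"
  by (induction w) (auto simp: word_mat_def)

lemma (in semiring_hom) map_mat_kron:
  "map_mat hom (kron A B) = kron (map_mat hom A) (map_mat hom B)"
proof (rule eq_matI)
  fix i j assume "i < dim_row (kron (map_mat hom A) (map_mat hom B))"
    "j < dim_col (kron (map_mat hom A) (map_mat hom B))"
  then have ij: "i < dim_row A * dim_row B" "j < dim_col A * dim_col B"
    by (auto simp: kron_def)
  moreover from ij have "0 < dim_row B" "0 < dim_col B"
    by (auto intro: gr0I)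
  ultimately have "i div dim_row B < dim_row A" "j div dim_col B < dim_col A"
    "i mod dim_row B < dim_row B" "j mod dim_col B < dim_col B"
    by (auto simp: less_mult_imp_div_less)
  with ij show "map_mat hom (kron A B) $$ (i, j) = kron (map_mat hom A) (map_mat hom B) $$ (i, j)"
    by (simp add: index_kron hom_mult)
qed (auto simp: kron_def)

lemma (in semiring_hom) map_mat_kron_list:
  "map_mat hom (kron_list As) = kron_list (map (map_mat hom) As)"
  by (induction As) (auto simp: map_mat_kron mat_hom_one)

lemma (in semiring_hom) map_mat_word_mat:
  "\<forall>x\<in>set w. V x \<in> carrier_mat n n \<Longrightarrow>
    map_mat hom (word_mat n V w) = word_mat n (\<lambda>x. map_mat hom (V x)) w"
proof (induction w)
  case Nil
  then show ?case by (simp add: word_mat_def mat_hom_one)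
next
  case (Cons x w)
  then have "V x \<in> carrier_mat n n" "word_mat n V w \<in> carrier_mat n n"
    by (auto intro: word_mat_carrier)
  with Cons show ?case
    by (simp add: word_mat_Cons mat_hom_mult)
qed

lemma pc_eval_carrier: "pc_eval n k e V f \<in> carrier_mat (n ^ k) (n ^ k)"
  by (simp add: pc_eval_def)

lemma pc_eval_zero: "pc_eval n k e V 0 = 0\<^sub>m (n ^ k) (n ^ k)"
  by (rule eq_matI) (auto simp: pc_eval_def)

lemma (in semiring_hom) map_mat_pc_eval:
  assumes V: "\<And>i x. V i x \<in> carrier_mat n n"
  shows "map_mat hom (pc_eval n k e V f) = pc_eval n k (hom \<circ> e) (\<lambda>i x. map_mat hom (V i x)) f"
proof (rule eq_matI)
  fix r c assume "r < dim_row (pc_eval n k (hom \<circ> e) (\<lambda>i x. map_mat hom (V i x)) f)"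
    "c < dim_col (pc_eval n k (hom \<circ> e) (\<lambda>i x. map_mat hom (V i x)) f)"
  then have rc: "r < n ^ k" "c < n ^ k"
    by (auto simp: pc_eval_def)
  have "hom (kron_list (map (\<lambda>i. word_mat n (V i) (m ! i)) [0..<k]) $$ (r, c)) =
      kron_list (map (\<lambda>i. word_mat n (\<lambda>x. map_mat hom (V i x)) (m ! i)) [0..<k]) $$ (r, c)" for m
  proof -
    have "kron_list (map (\<lambda>i. word_mat n (V i) (m ! i)) [0..<k]) \<in> carrier_mat (n ^ k) (n ^ k)"
      using kron_list_carrier[of "map (\<lambda>i. word_mat n (V i) (m ! i)) [0..<k]" n] V
      by (auto intro!: word_mat_carrier)
    then have "hom (kron_list (map (\<lambda>i. word_mat n (V i) (m ! i)) [0..<k]) $$ (r, c)) =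
        map_mat hom (kron_list (map (\<lambda>i. word_mat n (V i) (m ! i)) [0..<k])) $$ (r, c)"
      using rc by simp
    then show ?thesis
      by (simp add: map_mat_kron_list map_mat_word_mat V o_def)
  qed
  with rc show "map_mat hom (pc_eval n k e V f) $$ (r, c) =
      pc_eval n k (hom \<circ> e) (\<lambda>i x. map_mat hom (V i x)) f $$ (r, c)"
    by (simp add: pc_eval_def hom_distribs)
qed (auto simp: pc_eval_def)

lemma pc_eval_cong:
  assumes "pc_poly k X f" and "\<And>i x. i < k \<Longrightarrow> x \<in> X i \<Longrightarrow> V i x = V' i x"
  shows "pc_eval n k e V f = pc_eval n k e V' f"
proof -
  have "word_mat n (V i) (m ! i) = word_mat n (V' i) (m ! i)"
    if "m \<in> Poly_Mapping.keys f" "i < k" for m i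
  proof -
    have "set (m ! i) \<subseteq> X i"
      using assms(1) that unfolding pc_poly_def pc_monomials_def by blast
    with assms(2) that(2) show ?thesis
      by (intro word_mat_cong) auto
  qed
  then show ?thesis
    unfolding pc_eval_def
    by (intro arg_cong[where f="mat _ _"] ext sum.cong refl arg_cong2[where f="(*)"]
        arg_cong2[where f="($$)"] arg_cong[where f=kron_list]) auto
qed

section \<open>Identities and the generic matrices\<close>

lemma (in comm_ring_hom) map_mat_eval_poly_pc_eval:
  assumes M: "\<And>x. M x \<in> carrier_mat n n"
  shows "map_mat (eval_poly hom q) (pc_eval n k const_poly (\<lambda>_. M) f) =
    pc_eval n k hom (\<lambda>_ x. map_mat (eval_poly hom q) (M x)) f"
proof -
  interpret eval: comm_ring_hom "eval_poly hom q"
    by (rule eval_poly_comm_ring_hom) unfold_locales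
  show ?thesis
    using eval.map_mat_pc_eval[of "\<lambda>_. M" n k const_poly f] M by (simp add: eval_poly_const_poly)
qed

lemma pc_identity_imp_pc_eval_poly_mat_zero:
  fixes M :: "'v \<Rightarrow> ('w, 'a::field) genpoly mat" and emb :: "'a \<Rightarrow> 'b::field"
  assumes inf: "infinite (UNIV :: 'a set)" and emb: "field_hom emb"
    and M: "\<And>x. M x \<in> carrier_mat n n" and identity: "pc_identity n k X emb f"
  shows "pc_eval n k const_poly (\<lambda>_. M) f = 0\<^sub>m (n ^ k) (n ^ k)"
proof (rule eval_poly_mat_eq_zero_imp_zero[OF inf emb pc_eval_carrier])
  interpret comm_ring_hom emb
    using emb by (simp add: field_hom_def idom_hom_def)
  fix q
  have "map_mat (eval_poly emb q) (pc_eval n k const_poly (\<lambda>_. M) f) =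
      pc_eval n k emb (\<lambda>_ x. map_mat (eval_poly emb q) (M x)) f"
    by (rule map_mat_eval_poly_pc_eval[OF M])
  also have "\<dots> = 0\<^sub>m (n ^ k) (n ^ k)"
    using identity M unfolding pc_identity_def by auto
  finally show "map_mat (eval_poly emb q) (pc_eval n k const_poly (\<lambda>_. M) f) = 0\<^sub>m (n ^ k) (n ^ k)" .
qed

lemma Phi_zero_imp_pc_identity:
  fixes f :: "'v list list \<Rightarrow>\<^sub>0 'a::field" and emb :: "'a \<Rightarrow> 'b::field"
  assumes emb: "comm_ring_hom emb"
    and disj: "\<forall>i<k. \<forall>j<k. i \<noteq> j \<longrightarrow> X i \<inter> X j = {}"
    and pc: "pc_poly k X f" and Phi: "Phi n k f = 0\<^sub>m (n ^ k) (n ^ k)"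
  shows "pc_identity n k X emb f"
  unfolding pc_identity_def
proof (intro allI impI)
  interpret comm_ring_hom emb by fact
  fix v :: "nat \<Rightarrow> 'v \<Rightarrow> 'b mat"
  assume v: "\<forall>i<k. \<forall>x\<in>X i. v i x \<in> carrier_mat n n"
  text \<open>By disjointness a single point q of the generic coordinates realises all of v.\<close>
  define factor where "factor x = (SOME i. i < k \<and> x \<in> X i)" for x
  have factor: "factor x = i" if "i < k" "x \<in> X i" for i x
    using someI[of "\<lambda>i. i < k \<and> x \<in> X i" i] disj that by (auto simp: factor_def)
  define q where "q = (\<lambda>(x, a, b). v (factor x) x $$ (a, b))"
  have generic: "generic_mat n x \<in> carrier_mat n n" for x :: 'v
    by (simp add: generic_mat_def)
  have "pc_eval n k emb v f = pc_eval n k emb (\<lambda>_ x. map_mat (eval_poly emb q) (generic_mat n x)) f"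
  proof (rule pc_eval_cong[OF pc])
    fix i x assume "i < k" "x \<in> X i"
    with v factor have "v i x \<in> carrier_mat n n" "factor x = i"
      by auto
    then show "v i x = map_mat (eval_poly emb q) (generic_mat n x)"
      by (auto simp: generic_mat_def q_def eval_poly_tvar intro!: eq_matI)
  qed
  also have "\<dots> = map_mat (eval_poly emb q) (Phi n k f)"
    unfolding Phi_def by (rule map_mat_eval_poly_pc_eval[OF generic, symmetric])
  also have "\<dots> = 0\<^sub>m (n ^ k) (n ^ k)"
    unfolding Phi by (rule eq_matI) auto
  finally show "pc_eval n k emb v f = 0\<^sub>m (n ^ k) (n ^ k)" .
qed

section \<open>Faithfulness of the superdiagonal matrices in low degree\<close>

fun kron_index :: "nat \<Rightarrow> nat list \<Rightarrow> nat" where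
  "kron_index n [] = 0"
| "kron_index n (l # L) = l * n ^ length L + kron_index n L"

lemma kron_index_less: "\<forall>l\<in>set L. l < n \<Longrightarrow> kron_index n L < n ^ length L"
proof (induction L)
  case (Cons l L)
  then have "kron_index n (l # L) < (l + 1) * n ^ length L"
    by simp
  also have "\<dots> \<le> n * n ^ length L"
    using Cons.prems by (intro mult_right_mono) auto
  finally show ?case by simp
qed simp

lemma kron_index_replicate_0 [simp]: "kron_index n (replicate k 0) = 0"
  by (induction k) auto

lemma kron_index_Cons_div_mod:
  assumes "\<forall>l\<in>set L. l < n"
  shows "kron_index n (l # L) div n ^ length L = l"
    and "kron_index n (l # L) mod n ^ length L = kron_index n L"
proof -
  have less: "kron_index n L < n ^ length L"
    using kron_index_less[OF assms] .
  have "kron_index n (l # L) = kron_index n L + l * n ^ length L"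
    by simp
  with less show "kron_index n (l # L) div n ^ length L = l" "kron_index n (l # L) mod n ^ length L = kron_index n L"
    by (simp_all only: div_mult_self1 mod_mult_self1 div_less mod_less)
qed

lemma kron_list_index:
  assumes "\<forall>A\<in>set As. A \<in> carrier_mat n n" "length R = length As" "length L = length As"
    "\<forall>l\<in>set R. l < n" "\<forall>l\<in>set L. l < n"
  shows "kron_list As $$ (kron_index n R, kron_index n L) = (\<Prod>j<length As. As ! j $$ (R ! j, L ! j))"
  using assms
proof (induction As arbitrary: R L)
  case (Cons A As)
  obtain r R' l L' where RL: "R = r # R'" "L = l # L'"
    using Cons.prems(2,3) by (cases R; cases L) auto
  have lengths: "length R' = length As" "length L' = length As"
    using Cons.prems(2,3) RL by simp_all
  have "kron_index n R < n * n ^ length As" "kron_index n L < n * n ^ length As"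
    using kron_index_less[of R n] kron_index_less[of L n] Cons.prems(2-5) by simp_all
  moreover have "kron_list As \<in> carrier_mat (n ^ length As) (n ^ length As)" "A \<in> carrier_mat n n"
    using Cons.prems(1) by (auto intro: kron_list_carrier)
  ultimately have "kron_list (A # As) $$ (kron_index n R, kron_index n L)
      = A $$ (r, l) * kron_list As $$ (kron_index n R', kron_index n L')"
    using kron_index_Cons_div_mod[of R' n r] kron_index_Cons_div_mod[of L' n l] Cons.prems(4,5)
    by (simp add: index_kron RL lengths)
  also have "\<dots> = (\<Prod>j<length (A # As). (A # As) ! j $$ (R ! j, L ! j))"
    using Cons.IH[of R' L'] Cons.prems RL lengths by (simp add: prod.lessThan_Suc_shift del: prod.lessThan_Suc)
  finally show ?case .
qed simp

lemma word_mat_superdiag_index: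
  fixes g :: "'v \<Rightarrow> nat \<Rightarrow> nat \<Rightarrow> 'b::comm_semiring_1"
  assumes "a + length w < n" "b < n"
  shows "word_mat n (\<lambda>x. mat n n (\<lambda>(i, j). if j = i + 1 then g x i j else 0)) w $$ (a, b) =
    (if b = a + length w then \<Prod>s<length w. g (w ! s) (a + s) (a + s + 1) else 0)"
  using assms
proof (induction w arbitrary: a)
  case Nil
  then show ?case by (simp add: word_mat_def)
next
  case (Cons x w)
  let ?V = "\<lambda>x. mat n n (\<lambda>(i, j). if j = i + 1 then g x i j else 0)"
  let ?W = "word_mat n ?V w"
  have W: "?W \<in> carrier_mat n n"
    by (rule word_mat_carrier) auto
  have "word_mat n ?V (x # w) $$ (a, b) = (\<Sum>i<n. ?V x $$ (a, i) * ?W $$ (i, b))"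
    using W Cons.prems by (simp add: word_mat_Cons scalar_prod_def atLeast0LessThan)
  also have "\<dots> = (\<Sum>i<n. if i = a + 1 then g x a (a + 1) * ?W $$ (a + 1, b) else 0)"
    using Cons.prems by (intro sum.cong refl) auto
  also have "\<dots> = g x a (a + 1) * ?W $$ (a + 1, b)"
    using Cons.prems by simp
  also have "\<dots> = (if b = a + length (x # w) then \<Prod>s<length (x # w). g ((x # w) ! s) (a + s) (a + s + 1) else 0)"
    using Cons.IH[of "a + 1"] Cons.prems by (simp add: prod.lessThan_Suc_shift del: prod.lessThan_Suc)
  finally show ?case .
qed

definition superdiag_monom :: "'v list list \<Rightarrow> ('v \<times> nat \<times> nat) \<Rightarrow>\<^sub>0 nat" where
  "superdiag_monom m = (\<Sum>j<length m. \<Sum>s<length (m ! j). Poly_Mapping.single (m ! j ! s, s, s + 1) 1)"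

lemma prod_single_one:
  "(\<Prod>i\<in>A. Poly_Mapping.single (g i) (1::'a::comm_semiring_1)) = Poly_Mapping.single (sum g A) 1"
  by (induction A rule: infinite_finite_induct) (simp_all add: mult_single)

lemma kron_list_superdiag_index:
  assumes "\<forall>w\<in>set m. length w < n" "length L = length m" "\<forall>l\<in>set L. l < n"
  shows "kron_list (map (word_mat n (superdiag_mat n)) m) $$ (0, kron_index n L) =
    (if map length m = L then Poly_Mapping.single (superdiag_monom m) 1 else (0 :: ('v, 'a::comm_ring_1) genpoly))"
proof -
  let ?entry = "\<lambda>j. word_mat n (superdiag_mat n) (m ! j) $$ (0, L ! j) :: ('v, 'a) genpoly"
  let ?tvars = "\<lambda>j. \<Prod>s<length (m ! j). tvar (m ! j ! s) s (s + 1) :: ('v, 'a) genpoly"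
  have carrier: "\<forall>A\<in>set (map (word_mat n (superdiag_mat n)) m). A \<in> carrier_mat n n"
    by (auto intro!: word_mat_carrier simp: superdiag_mat_def)
  have "\<forall>l\<in>set (replicate (length m) 0). l < n"
    using assms(1) by (cases m) auto
  then have "kron_list (map (word_mat n (superdiag_mat n)) m) $$ (0, kron_index n L) = (\<Prod>j<length m. ?entry j)"
    using kron_list_index[OF carrier, of "replicate (length m) 0" L] assms(2,3) by simp
  also have "\<dots> = (\<Prod>j<length m. if L ! j = length (m ! j) then ?tvars j else 0)"
  proof (rule prod.cong[OF refl])
    fix j assume "j \<in> {..<length m}"
    then have "length (m ! j) < n" "L ! j < n"
      using assms by auto
    then show "?entry j = (if L ! j = length (m ! j) then ?tvars j else 0)"
      using word_mat_superdiag_index[of 0 "m ! j" n "L ! j" tvar]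
      by (cases "L ! j = length (m ! j)") (simp_all add: superdiag_mat_def[abs_def])
  qed
  also have "\<dots> = (if map length m = L then Poly_Mapping.single (superdiag_monom m) 1 else 0)"
  proof (cases "map length m = L")
    case True
    then show ?thesis
      by (auto simp: superdiag_monom_def tvar_def prod_single_one)
  next
    case False
    then have "\<exists>j\<in>{..<length m}. L ! j \<noteq> length (m ! j)"
      using assms(2) by (auto intro: nth_equalityI)
    with False show ?thesis
      by (subst prod_zero) auto
  qed
  finally show ?thesis .
qed

lemma length_le_pc_degree:
  assumes "m \<in> Poly_Mapping.keys f" "w \<in> set m"
  shows "length w \<le> pc_degree f"
proof -
  have "length w \<le> sum_list (map length m)"
    using assms(2) by (simp add: member_le_sum_list)
  also have "\<dots> \<le> pc_degree f"
    unfolding pc_degree_def using assms(1) by (intro Max_ge) auto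
  finally show ?thesis .
qed

lemma Psi_index:
  fixes f :: "'v list list \<Rightarrow>\<^sub>0 'a::comm_ring_1"
  assumes pc: "pc_poly k X f" and deg: "pc_degree f < n"
    and L: "length L = k" "\<forall>l\<in>set L. l < n"
  shows "Psi n k f $$ (0, kron_index n L) =
    (\<Sum>m\<in>{m \<in> Poly_Mapping.keys f. map length m = L}. Poly_Mapping.single (superdiag_monom m) (Poly_Mapping.lookup f m))"
proof -
  have "0 < n" "kron_index n L < n ^ k"
    using deg kron_index_less[OF L(2)] L(1) by auto
  then have "Psi n k f $$ (0, kron_index n L) = (\<Sum>m\<in>Poly_Mapping.keys f. const_poly (Poly_Mapping.lookup f m) *
      kron_list (map (\<lambda>i. word_mat n (superdiag_mat n) (m ! i)) [0..<k]) $$ (0, kron_index n L))"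
    by (simp add: Psi_def pc_eval_def)
  also have "\<dots> = (\<Sum>m\<in>Poly_Mapping.keys f.
      if map length m = L then Poly_Mapping.single (superdiag_monom m) (Poly_Mapping.lookup f m) else 0)"
  proof (rule sum.cong[OF refl])
    fix m assume m: "m \<in> Poly_Mapping.keys f"
    then have "length m = k"
      using pc by (auto simp: pc_poly_def pc_monomials_def)
    moreover have "length w < n" if "w \<in> set m" for w
      using length_le_pc_degree[OF m that] deg by simp
    moreover have "map (\<lambda>i. g (m ! i)) [0..<length m] = map g m" for g :: "'v list \<Rightarrow> ('v, 'a) genpoly mat"
      by (rule nth_equalityI) auto
    ultimately show "const_poly (Poly_Mapping.lookup f m) *
        kron_list (map (\<lambda>i. word_mat n (superdiag_mat n) (m ! i)) [0..<k]) $$ (0, kron_index n L) =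
      (if map length m = L then Poly_Mapping.single (superdiag_monom m) (Poly_Mapping.lookup f m) else 0)"
      using L by (auto simp: kron_list_superdiag_index const_poly_def mult_single)
  qed
  also have "\<dots> = (\<Sum>m\<in>{m \<in> Poly_Mapping.keys f. map length m = L}.
      Poly_Mapping.single (superdiag_monom m) (Poly_Mapping.lookup f m))"
    by (simp add: sum.inter_filter)
  finally show ?thesis .
qed

lemma lookup_superdiag_monom_eq_0_iff:
  "Poly_Mapping.lookup (superdiag_monom m) (x, s, t) = 0 \<longleftrightarrow>
    \<not> (\<exists>j<length m. s < length (m ! j) \<and> m ! j ! s = x \<and> t = s + 1)"
  by (auto simp: superdiag_monom_def lookup_sum lookup_single when_def)

text \<open>Since the factor index is forgotten, injectivity rests on the disjointness of the X_j.\<close>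
lemma inj_on_superdiag_monom:
  assumes disj: "\<forall>i<k. \<forall>j<k. i \<noteq> j \<longrightarrow> X i \<inter> X j = {}"
  shows "inj_on superdiag_monom {m \<in> pc_monomials k X. map length m = L}"
proof (rule inj_onI)
  fix m m' assume "m \<in> {m \<in> pc_monomials k X. map length m = L}" "m' \<in> {m \<in> pc_monomials k X. map length m = L}"
  then have m: "length m = k" "\<forall>j<k. set (m ! j) \<subseteq> X j"
    and m': "length m' = k" "\<forall>j<k. set (m' ! j) \<subseteq> X j"
    and lengths: "map length m = map length m'"
    by (auto simp: pc_monomials_def)
  assume eq: "superdiag_monom m = superdiag_monom m'"
  show "m = m'"
  proof (rule nth_equalityI)
    show "length m = length m'"
      using m m' by simp
    fix j assume "j < length m"
    then have j: "j < k"
      using m by simp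
    then have length_j: "length (m ! j) = length (m' ! j)"
      using lengths m m' by (metis nth_map)
    show "m ! j = m' ! j"
    proof (rule nth_equalityI[OF length_j])
      fix s assume s: "s < length (m ! j)"
      have "Poly_Mapping.lookup (superdiag_monom m) (m ! j ! s, s, s + 1) \<noteq> 0"
        using j m(1) s unfolding lookup_superdiag_monom_eq_0_iff by blast
      then have "Poly_Mapping.lookup (superdiag_monom m') (m ! j ! s, s, s + 1) \<noteq> 0"
        using eq by simp
      then obtain j' where j': "j' < k" "s < length (m' ! j')" "m' ! j' ! s = m ! j ! s"
        using m'(1) unfolding lookup_superdiag_monom_eq_0_iff by blast
      have "m ! j ! s \<in> X j"
        using m(2) j s nth_mem by blast
      moreover have "m ! j ! s \<in> X j'"
        using m'(2) j' nth_mem by (metis subsetD)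
      ultimately have "j' = j"
        using disj j j'(1) by blast
      then show "m ! j ! s = m' ! j ! s"
        using j'(3) by simp
    qed
  qed
qed

lemma Psi_zero_imp_zero:
  fixes f :: "'v list list \<Rightarrow>\<^sub>0 'a::comm_ring_1"
  assumes disj: "\<forall>i<k. \<forall>j<k. i \<noteq> j \<longrightarrow> X i \<inter> X j = {}"
    and pc: "pc_poly k X f" and deg: "pc_degree f < n" and Psi: "Psi n k f = 0\<^sub>m (n ^ k) (n ^ k)"
  shows "f = 0"
proof (rule poly_mapping_eqI)
  fix m0
  show "Poly_Mapping.lookup f m0 = Poly_Mapping.lookup 0 m0"
  proof (cases "m0 \<in> Poly_Mapping.keys f")
    case True
    define S where "S = {m \<in> Poly_Mapping.keys f. map length m = map length m0}"
    have "length m0 = k"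
      using True pc by (auto simp: pc_poly_def pc_monomials_def)
    moreover have "\<forall>w\<in>set m0. length w < n"
      using length_le_pc_degree[OF True] deg by (meson le_less_trans)
    ultimately have L: "length (map length m0) = k" "\<forall>l\<in>set (map length m0). l < n"
      by auto
    have "S \<subseteq> {m \<in> pc_monomials k X. map length m = map length m0}"
      using pc by (auto simp: S_def pc_poly_def)
    then have inj: "inj_on superdiag_monom S"
      using inj_on_superdiag_monom[OF disj] by (rule inj_on_subset[rotated])
    have "0 = Poly_Mapping.lookup (Psi n k f $$ (0, kron_index n (map length m0))) (superdiag_monom m0)"
      using Psi kron_index_less[OF L(2)] L(1) deg by simp
    also have "\<dots> = (\<Sum>m\<in>S. Poly_Mapping.lookup f m when superdiag_monom m = superdiag_monom m0)"
      by (simp add: Psi_index[OF pc deg L] S_def lookup_sum lookup_single)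
    also have "\<dots> = (\<Sum>m\<in>S. Poly_Mapping.lookup f m when m = m0)"
      using inj True by (intro sum.cong refl) (auto simp: S_def inj_on_eq_iff)
    also have "\<dots> = Poly_Mapping.lookup f m0"
      using True by (simp add: S_def when_def)
    finally show ?thesis by simp
  qed (simp add: in_keys_iff)
qed

theorem proposition1:
  fixes X :: "nat \<Rightarrow> 'v set" and f :: "'v list list \<Rightarrow>\<^sub>0 'a::field"
    and emb :: "'a \<Rightarrow> 'b::field" and k n :: nat
  assumes "infinite (UNIV :: 'a set)"
    and "k \<ge> 1" and "n \<ge> 1"
    and "\<forall>i<k. finite (X i)"
    and "\<forall>i<k. \<forall>j<k. i \<noteq> j \<longrightarrow> X i \<inter> X j = {}"
    and "pc_poly k X f"
    and "field_hom emb"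
  shows "(pc_identity n k X emb f \<longleftrightarrow> Phi n k f = 0\<^sub>m (n ^ k) (n ^ k))
    \<and> (pc_degree f < n \<longrightarrow>
         (pc_identity n k X emb f \<longleftrightarrow> Psi n k f = 0\<^sub>m (n ^ k) (n ^ k))
       \<and> (pc_identity n k X emb f \<longleftrightarrow> f = 0))"
proof -
  note inf = assms(1) and disj = assms(5) and pc = assms(6) and emb = assms(7)
  have "comm_ring_hom emb"
    using emb by (simp add: field_hom_def idom_hom_def)
  have Phi_iff: "pc_identity n k X emb f \<longleftrightarrow> Phi n k f = 0\<^sub>m (n ^ k) (n ^ k)"
  proof
    show "pc_identity n k X emb f \<Longrightarrow> Phi n k f = 0\<^sub>m (n ^ k) (n ^ k)"
      unfolding Phi_def by (rule pc_identity_imp_pc_eval_poly_mat_zero[OF inf emb]) (simp add: generic_mat_def)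
    show "Phi n k f = 0\<^sub>m (n ^ k) (n ^ k) \<Longrightarrow> pc_identity n k X emb f"
      by (rule Phi_zero_imp_pc_identity[OF \<open>comm_ring_hom emb\<close> disj pc])
  qed
  have identity_imp_Psi: "pc_identity n k X emb f \<Longrightarrow> Psi n k f = 0\<^sub>m (n ^ k) (n ^ k)"
    unfolding Psi_def by (rule pc_identity_imp_pc_eval_poly_mat_zero[OF inf emb]) (simp add: superdiag_mat_def)
  have zero: "pc_identity n k X emb 0" "Psi n k 0 = 0\<^sub>m (n ^ k) (n ^ k)"
    by (simp_all add: pc_identity_def Psi_def pc_eval_zero)
  show ?thesis
    using Phi_iff identity_imp_Psi Psi_zero_imp_zero[OF disj pc] zero by auto
qed

end
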